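(* Let $\alpha,\beta,\lambda\in\mathbb{R}$ with $\beta\neq 0$, let $J_1^{**}=\mathrm{diag}(\alpha+\beta i,\ \alpha-\beta i,\ \lambda)$ and $h>0$. Define $$T_1=2\beta\big(e^{\alpha h}\cos(\beta h)-e^{\lambda h}\big)+2e^{\alpha h}(\lambda-\alpha)\sin(\beta h),$$ $$\begin{aligned}T_2={}&\alpha\big(1-e^{\alpha h}\cos(\beta h)\big)\big(-2e^{\alpha h}\sin(\beta h)\big)+\alpha e^{\alpha h}\sin(\beta h)\big(2e^{\lambda h}-2e^{\alpha h}\cos(\beta h)\big)\\&+\beta\big(1-e^{\alpha h}\cos(\beta h)\big)\big(2e^{\alpha h}\cos(\beta h)-2e^{\lambda h}\big)+\beta e^{\alpha h}\sin(\beta h)\big(-2e^{\alpha h}\sin(\beta h)\big)\\&+\lambda\big(1-e^{\lambda h}\big)\big(2e^{\alpha h}\sin(\beta h)\big),\end{aligned}$$ $$T_3=-2\beta+2\alpha e^{\alpha h}\sin(\beta h)+2\beta e^{\alpha h}\cos(\beta h),$$ and $$\theta=\frac{T_1}{T_2},\qquad \phi=\frac{2e^{\alpha h}\sin(\beta h)}{2\beta+T_3\theta},\qquad \psi=e^{\lambda h}-\phi\lambda\big(\theta e^{\lambda h}+1-\theta\big).$$ Then (whenever these expressions are defined and the scheme is uniquely solvable for $\mathbf{x}_{k+1}$) the difference scheme $$\frac{\mathbf{x}_{k+1}-\psi\mathbf{x}_k}{\phi}=J_1^{**}\big[\theta\mathbf{x}_{k+1}+(1-\theta)\mathbf{x}_k\big]$$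 is exact for the system $\mathbf{x}'=J_1^{**}\mathbf{x}$.
   Context: A one-step difference scheme with step size $h>0$ for $\mathbf{x}'=M\mathbf{x}$ is called exact if for every initial vector $\mathbf{x}_0$ the sequence $(\mathbf{x}_k)$ it generates satisfies $\mathbf{x}_k=\mathbf{x}(kh)$ for all $k\ge 0$, where $\mathbf{x}(t)$ solves $\mathbf{x}'=M\mathbf{x}$, $\mathbf{x}(0)=\mathbf{x}_0$. *)

theory Defs
  imports "HOL-Analysis.Analysis"
begin

definition J1 :: "real \<Rightarrow> real \<Rightarrow> real \<Rightarrow> complex^3^3" where
  "J1 \<alpha> \<beta> l = (\<chi> i j. if i = j then
       (if i = 1 then Complex \<alpha> \<beta> else if i = 2 then Complex \<alpha> (-\<beta>) else complex_of_real l)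
     else 0)"

definition T1 :: "real \<Rightarrow> real \<Rightarrow> real \<Rightarrow> real \<Rightarrow> real" where
  "T1 \<alpha> \<beta> l h = 2*\<beta>*(exp (\<alpha>*h) * cos (\<beta>*h) - exp (l*h)) + 2* exp (\<alpha>*h)*(l - \<alpha>)* sin (\<beta>*h)"

definition T2 :: "real \<Rightarrow> real \<Rightarrow> real \<Rightarrow> real \<Rightarrow> real" where
  "T2 \<alpha> \<beta> l h =
     \<alpha>*(1 - exp (\<alpha>*h)* cos (\<beta>*h))*(-2* exp (\<alpha>*h)* sin (\<beta>*h))
   + \<alpha>* exp (\<alpha>*h)* sin (\<beta>*h)*(2* exp (l*h) - 2* exp (\<alpha>*h)* cos (\<beta>*h))
   + \<beta>*(1 - exp (\<alpha>*h)* cos (\<beta>*h))*(2* exp (\<alpha>*h)* cos (\<beta>*h) - 2* exp (l*h))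
   + \<beta>* exp (\<alpha>*h)* sin (\<beta>*h)*(-2* exp (\<alpha>*h)* sin (\<beta>*h))
   + l*(1 - exp (l*h))*(2* exp (\<alpha>*h)* sin (\<beta>*h))"

definition T3 :: "real \<Rightarrow> real \<Rightarrow> real \<Rightarrow> real \<Rightarrow> real" where
  "T3 \<alpha> \<beta> l h = -2*\<beta> + 2*\<alpha>* exp (\<alpha>*h)* sin (\<beta>*h) + 2*\<beta>* exp (\<alpha>*h)* cos (\<beta>*h)"

definition theta :: "real \<Rightarrow> real \<Rightarrow> real \<Rightarrow> real \<Rightarrow> real" where
  "theta \<alpha> \<beta> l h = T1 \<alpha> \<beta> l h / T2 \<alpha> \<beta> l h"

definition phi :: "real \<Rightarrow> real \<Rightarrow> real \<Rightarrow> real \<Rightarrow> real" where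
  "phi \<alpha> \<beta> l h = 2* exp (\<alpha>*h)* sin (\<beta>*h) / (2*\<beta> + T3 \<alpha> \<beta> l h * theta \<alpha> \<beta> l h)"

definition psi :: "real \<Rightarrow> real \<Rightarrow> real \<Rightarrow> real \<Rightarrow> real" where
  "psi \<alpha> \<beta> l h = exp (l*h) - phi \<alpha> \<beta> l h * l *
     (theta \<alpha> \<beta> l h * exp (l*h) + 1 - theta \<alpha> \<beta> l h)"

definition scheme_step :: "complex^3^3 \<Rightarrow> real \<Rightarrow> real \<Rightarrow> real \<Rightarrow> complex^3 \<Rightarrow> complex^3 \<Rightarrow> bool" where
  "scheme_step M \<theta> \<phi> \<psi> x x' \<longleftrightarrow>
     (1/\<phi>) *\<^sub>R (x' - \<psi> *\<^sub>R x) = M *v (\<theta> *\<^sub>R x' + (1 - \<theta>) *\<^sub>R x)"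

definition exact_scheme :: "complex^3^3 \<Rightarrow> real \<Rightarrow> real \<Rightarrow> real \<Rightarrow> real \<Rightarrow> bool" where
  "exact_scheme M h \<theta> \<phi> \<psi> \<longleftrightarrow>
     (\<forall>xs :: nat \<Rightarrow> complex^3. \<forall>X :: real \<Rightarrow> complex^3.
        (\<forall>k. scheme_step M \<theta> \<phi> \<psi> (xs k) (xs (Suc k))) \<longrightarrow>
        X 0 = xs 0 \<longrightarrow>
        (\<forall>t. (X has_vector_derivative (M *v X t)) (at t)) \<longrightarrow>
        (\<forall>k. xs k = X (real k * h)))"

end

theory Submission
  imports Defs
begin

text \<open>Since \<open>J1\<close> is diagonal, the scheme and the differential equation both decouple into
  scalar problems for its eigenvalues \<open>\<mu>\<close>. In the \<open>\<mu>\<close>-component one step of the scheme multiplies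
  by \<open>(\<psi> + \<phi>(1 - \<theta>)\<mu>) / (1 - \<phi>\<theta>\<mu>)\<close> and the flow over time \<open>h\<close> by \<open>exp (\<mu>h)\<close>, so the scheme is
  exact as soon as the two factors agree for every eigenvalue; unique solvability rules out
  \<open>1 = \<phi>\<theta>\<mu>\<close>. For \<open>\<mu> = \<lambda>\<close> the agreement is the definition of \<open>\<psi>\<close>; for \<open>\<mu> = \<alpha> + \<beta>i\<close> its real and
  imaginary parts are two equations whose solution is exactly the given \<open>\<theta>\<close> and \<open>\<phi>\<close>; and
  \<open>\<mu> = \<alpha> - \<beta>i\<close> follows by complex conjugation.\<close>

definition diag_matrix :: "('n::finite \<Rightarrow> 'a::zero) \<Rightarrow> 'a^'n^'n" where
  "diag_matrix d = (\<chi> i j. if i = j then d i else 0)"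

lemma diag_matrix_vector_mult_nth:
  fixes d :: "'n::finite \<Rightarrow> 'a::semiring_1"
  shows "(diag_matrix d *v x) $ i = d i * x $ i"
proof -
  have "(if i = j then d i else 0) * x $ j = (if i = j then d i * x $ i else 0)" for j
    by simp
  then show ?thesis
    by (simp add: diag_matrix_def matrix_vector_mult_def)
qed

lemma linear_ode_solution_eq_exp:
  fixes f :: "real \<Rightarrow> complex"
  assumes deriv: "\<And>t. (f has_vector_derivative c * f t) (at t)"
  shows "f s = exp (c * of_real s) * f 0"
proof -
  define g where "g = (\<lambda>t. exp (- (c * of_real t)) * f t)"
  have "(g has_vector_derivative 0) (at t within UNIV)" for t
  proof -
    have "((\<lambda>z. exp (- (c * z))) has_field_derivative exp (- (c * of_real t)) * - c) (at (of_real t))"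
      by (auto intro!: derivative_eq_intros)
    then have "((\<lambda>t. exp (- (c * of_real t))) has_vector_derivative exp (- (c * of_real t)) * - c) (at t)"
      by (rule has_vector_derivative_real_field)
    from has_vector_derivative_mult[OF this deriv]
    show ?thesis unfolding g_def by (simp add: algebra_simps)
  qed
  then obtain k where "\<And>t. g t = k"
    using has_vector_derivative_zero_constant[of UNIV g] by auto
  then have "exp (- (c * of_real s)) * f s = f 0"
    by (metis g_def mult_1 exp_zero minus_zero mult_zero_right of_real_0)
  then have "exp (c * of_real s) * f 0 = exp (c * of_real s) * exp (- (c * of_real s)) * f s"
    by (simp add: mult.assoc)
  then show ?thesis
    by (simp add: exp_minus_inverse)
qed

lemma diag_matrix_ode_solution_nth:
  fixes X :: "real \<Rightarrow> complex^'n::finite"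
  assumes "\<And>t. (X has_vector_derivative diag_matrix d *v X t) (at t)"
  shows "X s $ i = exp (d i * of_real s) * X 0 $ i"
proof (rule linear_ode_solution_eq_exp)
  fix t
  show "((\<lambda>t. X t $ i) has_vector_derivative d i * X t $ i) (at t)"
    using bounded_linear.has_vector_derivative[OF bounded_linear_vec_nth assms]
    by (simp add: diag_matrix_vector_mult_nth)
qed

lemma scaleR_vec_nth_complex: "(c *\<^sub>R v) $ i = of_real c * (v $ i :: complex)"
  by (subst vector_scaleR_component) (simp add: scaleR_conv_of_real)

lemma scheme_step_diag_matrix_iff:
  assumes "\<phi> \<noteq> 0"
  shows "scheme_step (diag_matrix d) \<theta> \<phi> \<psi> x x' \<longleftrightarrow>
    (\<forall>i. x' $ i - of_real \<psi> * x $ i = of_real \<phi> * d i * (of_real \<theta> * x' $ i + (1 - of_real \<theta>) * x $ i))"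
proof -
  have divide_eq: "of_real (1 / \<phi>) * z = w \<longleftrightarrow> z = of_real \<phi> * w" for z w :: complex
    using assms by (simp add: of_real_divide divide_eq_eq mult.commute)
  show ?thesis
    unfolding scheme_step_def vec_eq_iff
    by (simp only: scaleR_vec_nth_complex vector_minus_component vector_add_component
        diag_matrix_vector_mult_nth divide_eq of_real_diff of_real_1 mult.assoc)
qed

lemma scheme_step_unique_imp_nonsingular:
  assumes "\<phi> \<noteq> 0" and unique: "\<forall>x. \<exists>!x'. scheme_step (diag_matrix d) \<theta> \<phi> \<psi> x x'"
  shows "1 - of_real \<phi> * of_real \<theta> * d i \<noteq> 0"
proof
  assume singular: "1 - of_real \<phi> * of_real \<theta> * d i = 0"
  have "scheme_step (diag_matrix d) \<theta> \<phi> \<psi> 0 x'" if "x' = 0 \<or> x' = axis i 1" for x'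
    using that singular unfolding scheme_step_diag_matrix_iff[OF assms(1)]
    by (auto simp: axis_def algebra_simps)
  moreover have "axis i (1::complex) \<noteq> 0"
    by (simp add: axis_eq_0_iff)
  ultimately show False
    using unique by blast
qed

lemma scalar_scheme_step_eq_mult:
  fixes y y' \<mu> e p t q :: "'a::field"
  assumes step: "y' - q * y = p * \<mu> * (t * y' + (1 - t) * y)"
    and nonsingular: "1 - p * t * \<mu> \<noteq> 0"
    and exactness: "q + p * (1 - t) * \<mu> = e * (1 - p * t * \<mu>)"
  shows "y' = e * y"
proof -
  have "y' * (1 - p * t * \<mu>) = y * (q + p * (1 - t) * \<mu>)"
    using step by (simp add: algebra_simps)
  also have "\<dots> = (e * y) * (1 - p * t * \<mu>)"
    by (simp add: exactness)
  finally show ?thesis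
    using nonsingular by simp
qed

definition exact_on_eigenvalue :: "real \<Rightarrow> real \<Rightarrow> real \<Rightarrow> real \<Rightarrow> complex \<Rightarrow> bool" where
  "exact_on_eigenvalue h \<theta> \<phi> \<psi> \<mu> \<longleftrightarrow>
     of_real \<psi> + of_real \<phi> * (1 - of_real \<theta>) * \<mu> = exp (\<mu> * of_real h) * (1 - of_real \<phi> * of_real \<theta> * \<mu>)"

lemma exact_on_eigenvalue_cnj:
  "exact_on_eigenvalue h \<theta> \<phi> \<psi> \<mu> \<Longrightarrow> exact_on_eigenvalue h \<theta> \<phi> \<psi> (cnj \<mu>)"
  unfolding exact_on_eigenvalue_def by (drule arg_cong[of _ _ cnj]) (simp add: exp_cnj)

lemma exact_on_eigenvalue_of_real:
  "exact_on_eigenvalue h \<theta> \<phi> \<psi> (of_real l) \<longleftrightarrow> \<psi> + \<phi> * (1 - \<theta>) * l = exp (l * h) * (1 - \<phi> * \<theta> * l)"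
proof -
  have lhs: "of_real \<psi> + of_real \<phi> * (1 - of_real \<theta>) * of_real l = (of_real (\<psi> + \<phi> * (1 - \<theta>) * l) :: complex)"
    by simp
  have rhs: "exp (of_real l * of_real h) * (1 - of_real \<phi> * of_real \<theta> * of_real l)
      = (of_real (exp (l * h) * (1 - \<phi> * \<theta> * l)) :: complex)"
    by (simp flip: exp_of_real)
  show ?thesis
    by (simp only: exact_on_eigenvalue_def lhs rhs of_real_eq_iff)
qed

theorem exact_scheme_diag_matrix:
  fixes d :: "3 \<Rightarrow> complex"
  assumes "\<phi> \<noteq> 0"
    and unique: "\<forall>x. \<exists>!x'. scheme_step (diag_matrix d) \<theta> \<phi> \<psi> x x'"
    and exact: "\<And>i. exact_on_eigenvalue h \<theta> \<phi> \<psi> (d i)"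
  shows "exact_scheme (diag_matrix d) h \<theta> \<phi> \<psi>"
  unfolding exact_scheme_def
proof (intro allI impI)
  fix xs :: "nat \<Rightarrow> complex^3" and X :: "real \<Rightarrow> complex^3" and k
  assume steps: "\<forall>k. scheme_step (diag_matrix d) \<theta> \<phi> \<psi> (xs k) (xs (Suc k))"
    and init: "X 0 = xs 0"
    and ode: "\<forall>t. (X has_vector_derivative diag_matrix d *v X t) (at t)"
  have step: "xs (Suc k) $ i = exp (d i * of_real h) * xs k $ i" for k i
    using steps scheme_step_diag_matrix_iff[OF assms(1)]
      scheme_step_unique_imp_nonsingular[OF assms(1,2)] exact[unfolded exact_on_eigenvalue_def]
    by (blast intro: scalar_scheme_step_eq_mult)
  have "xs k $ i = exp (d i * of_real (real k * h)) * xs 0 $ i" for i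
    by (induction k) (simp_all add: step distrib_left distrib_right exp_add mult_ac)
  moreover have "X (real k * h) $ i = exp (d i * of_real (real k * h)) * xs 0 $ i" for i
    using diag_matrix_ode_solution_nth[of X d] ode init by simp
  ultimately show "xs k = X (real k * h)"
    by (simp add: vec_eq_iff)
qed

definition J1_eigenvalue :: "real \<Rightarrow> real \<Rightarrow> real \<Rightarrow> 3 \<Rightarrow> complex" where
  "J1_eigenvalue \<alpha> \<beta> l i =
     (if i = 1 then Complex \<alpha> \<beta> else if i = 2 then Complex \<alpha> (-\<beta>) else complex_of_real l)"

lemma J1_eq_diag_matrix: "J1 \<alpha> \<beta> l = diag_matrix (J1_eigenvalue \<alpha> \<beta> l)"
  unfolding J1_def diag_matrix_def J1_eigenvalue_def by (rule refl)

lemma exact_on_eigenvalue_Complex: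
  assumes T2: "T2 \<alpha> \<beta> l h \<noteq> 0" and denom: "2*\<beta> + T3 \<alpha> \<beta> l h * theta \<alpha> \<beta> l h \<noteq> 0"
  shows "exact_on_eigenvalue h (theta \<alpha> \<beta> l h) (phi \<alpha> \<beta> l h) (psi \<alpha> \<beta> l h) (Complex \<alpha> \<beta>)"
proof -
  define E C S L where "E = exp (\<alpha> * h)" and "C = cos (\<beta> * h)" and "S = sin (\<beta> * h)"
    and "L = exp (l * h)"
  define t p q where "t = theta \<alpha> \<beta> l h" and "p = phi \<alpha> \<beta> l h" and "q = psi \<alpha> \<beta> l h"
  have t: "t * T2 \<alpha> \<beta> l h = T1 \<alpha> \<beta> l h"
    using T2 by (simp add: t_def theta_def)
  have p: "p * (2*\<beta> + T3 \<alpha> \<beta> l h * t) = 2*E*S"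
    using denom by (simp add: p_def phi_def t_def E_def S_def)
  have q: "q = L - p * l * (t*L + 1 - t)"
    by (simp add: q_def psi_def p_def t_def L_def)
  note T_defs = T1_def T2_def T3_def E_def[symmetric] C_def[symmetric] S_def[symmetric] L_def[symmetric]
  \<comment> \<open>Once the denominators of \<open>\<theta>\<close> and \<open>\<phi>\<close> are cleared, both parts are polynomial identities in
    \<open>E, C, S, L\<close>; not even \<open>C\<^sup>2 + S\<^sup>2 = 1\<close> is needed.\<close>
  have "(q + p * (1 - t) * \<alpha> - (E*C * (1 - p*t*\<alpha>) + E*S * (p*t*\<beta>)))
      * (2*\<beta> + T3 \<alpha> \<beta> l h * t) * T2 \<alpha> \<beta> l h = 0"
    using t p unfolding q T_defs by algebra
  then have re: "q + p * (1 - t) * \<alpha> = E*C * (1 - p*t*\<alpha>) + E*S * (p*t*\<beta>)"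
    using T2 denom by (simp add: t_def)
  have "(p * (1 - t) * \<beta> - (E*S * (1 - p*t*\<alpha>) - E*C * (p*t*\<beta>)))
      * (2*\<beta> + T3 \<alpha> \<beta> l h * t) * T2 \<alpha> \<beta> l h = 0"
    using t p unfolding T_defs by algebra
  then have im: "p * (1 - t) * \<beta> = E*S * (1 - p*t*\<alpha>) - E*C * (p*t*\<beta>)"
    using T2 denom by (simp add: t_def)
  have "Complex \<alpha> \<beta> * of_real h = Complex (\<alpha> * h) (\<beta> * h)"
    by (simp add: complex_eq_iff)
  then have "exp (Complex \<alpha> \<beta> * of_real h) = Complex (E*C) (E*S)"
    unfolding E_def C_def S_def by (simp only: exp_Complex) (simp add: complex_eq_iff)
  with re im show ?thesis
    unfolding exact_on_eigenvalue_def t_def[symmetric] p_def[symmetric] q_def[symmetric]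
    by (simp add: complex_eq_iff algebra_simps)
qed

lemma exact_on_J1_eigenvalue:
  assumes "T2 \<alpha> \<beta> l h \<noteq> 0" and "2*\<beta> + T3 \<alpha> \<beta> l h * theta \<alpha> \<beta> l h \<noteq> 0"
  shows "exact_on_eigenvalue h (theta \<alpha> \<beta> l h) (phi \<alpha> \<beta> l h) (psi \<alpha> \<beta> l h) (J1_eigenvalue \<alpha> \<beta> l i)"
proof -
  have "exact_on_eigenvalue h (theta \<alpha> \<beta> l h) (phi \<alpha> \<beta> l h) (psi \<alpha> \<beta> l h) (of_real l)"
    unfolding exact_on_eigenvalue_of_real by (simp add: psi_def algebra_simps)
  with exact_on_eigenvalue_Complex[OF assms] exact_on_eigenvalue_cnj[OF exact_on_eigenvalue_Complex[OF assms]]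
  show ?thesis
    by (simp add: J1_eigenvalue_def complex_cnj)
qed

theorem corollary1:
  fixes \<alpha> \<beta> l h :: real
  assumes "\<beta> \<noteq> 0" and "h > 0"
    and "T2 \<alpha> \<beta> l h \<noteq> 0"
    and "2*\<beta> + T3 \<alpha> \<beta> l h * theta \<alpha> \<beta> l h \<noteq> 0"
    and "phi \<alpha> \<beta> l h \<noteq> 0"
    and "\<forall>x. \<exists>!x'. scheme_step (J1 \<alpha> \<beta> l) (theta \<alpha> \<beta> l h) (phi \<alpha> \<beta> l h) (psi \<alpha> \<beta> l h) x x'"
  shows "exact_scheme (J1 \<alpha> \<beta> l) h (theta \<alpha> \<beta> l h) (phi \<alpha> \<beta> l h) (psi \<alpha> \<beta> l h)"
  using assms(5,6) exact_on_J1_eigenvalue[OF assms(3,4)]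
  unfolding J1_eq_diag_matrix by (rule exact_scheme_diag_matrix)

end
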